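(* Let $G$ be a finitely generated group and $H\le K\le G$ subgroups such that $H\backslash G$ is narrow. Then either $[G:K]<\infty$ or $[K:H]<\infty$.
   Context: $H\backslash G$ is narrow if the Schreier coset graph $H\backslash\mathrm{Cay}(G,S)$ (quotient of the Cayley graph by the left $H$-action, edges of length 1) is narrow for some (equivalently any) finite generating set $S$. An unbounded connected graph $Y$ is narrow if for each $\mu\ge1$ there is $L(\mu)$ such that any $L(\mu)+1$ unbounded $\mu$-coarsely connected vertex subsets of $Y$ include two that intersect (a vertex subset $Z$ is $\mu$-coarsely connected if any two points of $Z$ are joined by a chain in $Z$ with consecutive distances at most $\mu$). *)

theory Defs
  imports "HOL-Algebra.Algebra"
begin

definition dist_le :: "'v set \<Rightarrow> ('v \<times> 'v) set \<Rightarrow> nat \<Rightarrow> 'v \<Rightarrow> 'v \<Rightarrow> bool" where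
  "dist_le V E n x y \<longleftrightarrow> (x, y) \<in> (E \<union> Id_on V) ^^ n"

definition unbounded_set :: "'v set \<Rightarrow> ('v \<times> 'v) set \<Rightarrow> 'v set \<Rightarrow> bool" where
  "unbounded_set V E Z \<longleftrightarrow> (\<forall>n. \<exists>x\<in>Z. \<exists>y\<in>Z. \<not> dist_le V E n x y)"

definition coarsely_connected :: "'v set \<Rightarrow> ('v \<times> 'v) set \<Rightarrow> nat \<Rightarrow> 'v set \<Rightarrow> bool" where
  "coarsely_connected V E \<mu> Z \<longleftrightarrow>
     (\<forall>x\<in>Z. \<forall>y\<in>Z. (x, y) \<in> {(a, b). a \<in> Z \<and> b \<in> Z \<and> dist_le V E \<mu> a b}\<^sup>*)"

definition connected_graph :: "'v set \<Rightarrow> ('v \<times> 'v) set \<Rightarrow> bool" where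
  "connected_graph V E \<longleftrightarrow> (\<forall>x\<in>V. \<forall>y\<in>V. \<exists>n. dist_le V E n x y)"

definition narrow_graph :: "'v set \<Rightarrow> ('v \<times> 'v) set \<Rightarrow> bool" where
  "narrow_graph V E \<longleftrightarrow> connected_graph V E \<and> unbounded_set V E V \<and>
     (\<forall>\<mu>::nat. \<mu> \<ge> 1 \<longrightarrow> (\<exists>L::nat. \<forall>Z :: nat \<Rightarrow> 'v set.
        (\<forall>i\<le>L. Z i \<subseteq> V \<and> unbounded_set V E (Z i) \<and> coarsely_connected V E \<mu> (Z i))
        \<longrightarrow> (\<exists>i\<le>L. \<exists>j\<le>L. i \<noteq> j \<and> Z i \<inter> Z j \<noteq> {})))"

definition schreier_edges :: "('a, 'b) monoid_scheme \<Rightarrow> 'a set \<Rightarrow> 'a set \<Rightarrow> ('a set \<times> 'a set) set" where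
  "schreier_edges G H S =
     (let E0 = {(H #>\<^bsub>G\<^esub> g, H #>\<^bsub>G\<^esub> (g \<otimes>\<^bsub>G\<^esub> s)) | g s. g \<in> carrier G \<and> s \<in> S}
      in E0 \<union> E0\<inverse>)"

definition narrow_coset_space :: "('a, 'b) monoid_scheme \<Rightarrow> 'a set \<Rightarrow> bool" where
  "narrow_coset_space G H \<longleftrightarrow>
     (\<exists>S. finite S \<and> S \<subseteq> carrier G \<and> generate G S = carrier G \<and>
          narrow_graph (rcosets\<^bsub>G\<^esub> H) (schreier_edges G H S))"

end

theory Submission
  imports Defs
begin

text \<open>Suppose both indices are infinite and fix a finite generating set \<open>S\<close>. By Zorn's lemma
  there is a set \<open>T\<close> of representatives of the right cosets \<open>K\<backslash>G\<close> that contains \<open>1\<close> and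
  spans a connected subgraph of \<open>Cay(G,S)\<close>: a maximal such partial transversal meets every coset,
  because it can always be grown along a generator. For \<open>k \<in> K\<close> the translate \<open>Hk T\<close> of \<open>T\<close>
  in \<open>H\<backslash>G\<close> is then \<open>1\<close>-coarsely connected, and it is unbounded since it projects onto the
  infinite set \<open>K\<backslash>G\<close> while bounded sets in the locally finite Schreier graph are finite.
  Translates by \<open>k, k'\<close> with \<open>Hk \<noteq> Hk'\<close> are disjoint, as \<open>T\<close> meets each \<open>K\<close>-coset once.
  Infinitely many cosets \<open>Hk\<close> in \<open>K\<close> thus contradict narrowness of \<open>H\<backslash>G\<close>.\<close>

fun word_ball :: "('a, 'b) monoid_scheme \<Rightarrow> 'a set \<Rightarrow> nat \<Rightarrow> 'a set" where
  "word_ball G S 0 = {\<one>\<^bsub>G\<^esub>}"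
| "word_ball G S (Suc n) = word_ball G S n \<union> (word_ball G S n <#>\<^bsub>G\<^esub> (S \<union> m_inv G ` S))"

definition cayley_edges_on :: "('a, 'b) monoid_scheme \<Rightarrow> 'a set \<Rightarrow> 'a set \<Rightarrow> ('a \<times> 'a) set" where
  "cayley_edges_on G S T = {(a, b). a \<in> T \<and> b \<in> T \<and> (\<exists>s\<in>S. b = a \<otimes>\<^bsub>G\<^esub> s \<or> a = b \<otimes>\<^bsub>G\<^esub> s)}"

definition connected_partial_transversal ::
    "('a, 'b) monoid_scheme \<Rightarrow> 'a set \<Rightarrow> 'a set \<Rightarrow> 'a set \<Rightarrow> bool" where
  "connected_partial_transversal G S K T \<longleftrightarrow>
     T \<subseteq> carrier G \<and> \<one>\<^bsub>G\<^esub> \<in> T \<and> inj_on (\<lambda>g. K #>\<^bsub>G\<^esub> g) T \<and>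
     (\<forall>t\<in>T. (\<one>\<^bsub>G\<^esub>, t) \<in> (cayley_edges_on G S T)\<^sup>*)"

lemma cayley_edges_on_mono: "T \<subseteq> T' \<Longrightarrow> cayley_edges_on G S T \<subseteq> cayley_edges_on G S T'"
  unfolding cayley_edges_on_def by auto

lemma sym_cayley_edges_on: "sym (cayley_edges_on G S T)"
  unfolding cayley_edges_on_def sym_def by auto

lemma narrow_graph_family_intersect:
  fixes Z :: "nat \<Rightarrow> 'v set"
  assumes "narrow_graph V E" and "\<mu> \<ge> 1"
    and "\<And>i. Z i \<subseteq> V" "\<And>i. unbounded_set V E (Z i)" "\<And>i. coarsely_connected V E \<mu> (Z i)"
  shows "\<exists>i j. i \<noteq> j \<and> Z i \<inter> Z j \<noteq> {}"
proof -
  obtain L where "\<forall>i\<le>L. Z i \<subseteq> V \<and> unbounded_set V E (Z i) \<and> coarsely_connected V E \<mu> (Z i)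
      \<Longrightarrow> \<exists>i\<le>L. \<exists>j\<le>L. i \<noteq> j \<and> Z i \<inter> Z j \<noteq> {}"
    using assms(1,2) unfolding narrow_graph_def by metis
  then show ?thesis using assms(3-5) by blast
qed

context group
begin

lemma word_ball_finite: "finite S \<Longrightarrow> finite (word_ball G S n)"
  by (induction n) (auto simp: set_mult_def)

lemma word_ball_carrier: "S \<subseteq> carrier G \<Longrightarrow> word_ball G S n \<subseteq> carrier G"
proof (induction n)
  case (Suc n)
  then show ?case using setmult_subset_G[of "word_ball G S n" "S \<union> m_inv G ` S"] by auto
qed simp

lemma word_ball_Suc_mult:
  "w \<in> word_ball G S n \<Longrightarrow> u \<in> S \<union> m_inv G ` S \<Longrightarrow> w \<otimes> u \<in> word_ball G S (Suc n)"
  by (force simp: set_mult_def)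

lemma rcos_eq_mult_right:
  assumes "M \<subseteq> carrier G" "x \<in> carrier G" "y \<in> carrier G" "h \<in> carrier G" "M #> x = M #> y"
  shows "M #> (x \<otimes> h) = M #> (y \<otimes> h)"
  using assms by (metis coset_mult_assoc)

lemma set_mult_subgroup_absorb:
  assumes "subgroup H G" "subgroup K G" "H \<subseteq> K"
  shows "K <#> H = K"
proof
  show "K <#> H \<subseteq> K"
    using mono_set_mult[OF order_refl assms(3)] subgroup_mult_id[OF assms(2)] by blast
  show "K \<subseteq> K <#> H"
    using subgroup.one_closed[OF assms(1)] subgroup.subset[OF assms(2)]
    unfolding set_mult_def by force
qed

lemma set_mult_rcos_project:
  assumes "subgroup H G" "subgroup K G" "H \<subseteq> K" "x \<in> carrier G"
  shows "K <#> (H #> x) = K #> x"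
  using assms setmult_rcos_assoc set_mult_subgroup_absorb subgroup.subset by metis

lemma schreier_neighbour:
  assumes H: "H \<subseteq> carrier G" and S: "S \<subseteq> carrier G" and x: "x \<in> carrier G"
    and "(H #> x, c) \<in> schreier_edges G H S"
  shows "\<exists>u\<in>S \<union> m_inv G ` S. c = H #> (x \<otimes> u)"
proof -
  from assms(4) consider
      g s where "g \<in> carrier G" "s \<in> S" "H #> x = H #> g" "c = H #> (g \<otimes> s)"
    | g s where "g \<in> carrier G" "s \<in> S" "c = H #> g" "H #> x = H #> (g \<otimes> s)"
    unfolding schreier_edges_def Let_def by blast
  then show ?thesis
  proof cases
    case (1 g s)
    then have "c = H #> (x \<otimes> s)" using rcos_eq_mult_right[OF H x] S by auto
    then show ?thesis using 1 by blast
  next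
    case (2 g s)
    then have s: "s \<in> carrier G" using S by blast
    with 2 have "H #> (x \<otimes> inv s) = H #> (g \<otimes> s \<otimes> inv s)"
      using rcos_eq_mult_right[OF H x] by simp
    also have "\<dots> = c" using 2 s by (simp add: m_assoc)
    finally show ?thesis using 2 by blast
  qed
qed

lemma schreier_walk_word_ball:
  assumes H: "H \<subseteq> carrier G" and S: "S \<subseteq> carrier G" and a: "a \<in> carrier G"
    and "dist_le (rcosets H) (schreier_edges G H S) n (H #> a) c"
  shows "\<exists>w\<in>word_ball G S n. c = H #> (a \<otimes> w)"
  using assms(4) unfolding dist_le_def
proof (induction n arbitrary: c)
  case 0
  then show ?case using a by simp
next
  case (Suc n)
  then obtain c' where walk: "(H #> a, c') \<in> (schreier_edges G H S \<union> Id_on (rcosets H)) ^^ n"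
    and step: "(c', c) \<in> schreier_edges G H S \<union> Id_on (rcosets H)" by auto
  obtain w where w: "w \<in> word_ball G S n" "c' = H #> (a \<otimes> w)" using Suc.IH[OF walk] by blast
  have wc: "w \<in> carrier G" using w(1) word_ball_carrier[OF S] by blast
  show ?case
  proof (cases "c = c'")
    case True
    then show ?thesis using w by auto
  next
    case False
    then have "(H #> (a \<otimes> w), c) \<in> schreier_edges G H S" using step w(2) by blast
    then obtain u where u: "u \<in> S \<union> m_inv G ` S" "c = H #> (a \<otimes> w \<otimes> u)"
      using schreier_neighbour[OF H S] a wc by blast
    then have "c = H #> (a \<otimes> (w \<otimes> u))" using S a wc by (auto simp: m_assoc)
    then show ?thesis using word_ball_Suc_mult[OF w(1) u(1)] by blast
  qed
qed

lemma schreier_bounded_finite: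
  assumes H: "H \<subseteq> carrier G" and "finite S" and S: "S \<subseteq> carrier G" and "Z \<subseteq> rcosets H"
    and "\<not> unbounded_set (rcosets H) (schreier_edges G H S) Z"
  shows "finite Z"
proof (cases "Z = {}")
  case False
  then obtain a where a: "a \<in> carrier G" "H #> a \<in> Z"
    using assms(4) unfolding RCOSETS_def by blast
  obtain n where n: "\<forall>x\<in>Z. \<forall>y\<in>Z. dist_le (rcosets H) (schreier_edges G H S) n x y"
    using assms(5) unfolding unbounded_set_def by blast
  have "Z \<subseteq> (\<lambda>w. H #> (a \<otimes> w)) ` word_ball G S n"
    using n a schreier_walk_word_ball[OF H S a(1)] by blast
  then show ?thesis using word_ball_finite[OF assms(2)] finite_subset by blast
qed simp

lemma connected_partial_transversal_chain_Union:
  assumes "C \<noteq> {}" and "subset.chain (Collect (connected_partial_transversal G S K)) C"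
  shows "connected_partial_transversal G S K (\<Union>C)"
proof -
  have CT: "\<And>M. M \<in> C \<Longrightarrow> connected_partial_transversal G S K M"
    and ch: "\<And>M M'. M \<in> C \<Longrightarrow> M' \<in> C \<Longrightarrow> M \<subseteq> M' \<or> M' \<subseteq> M"
    using assms(2) unfolding subset.chain_def by auto
  have "inj_on (\<lambda>g. K #> g) (\<Union>C)"
  proof (rule inj_onI)
    fix x y assume "x \<in> \<Union>C" "y \<in> \<Union>C" and eq: "K #> x = K #> y"
    then obtain M M' where "M \<in> C" "M' \<in> C" "x \<in> M" "y \<in> M'" by blast
    with ch obtain N where N: "N \<in> C" "x \<in> N" "y \<in> N" by blast
    then have "inj_on (\<lambda>g. K #> g) N"
      using CT unfolding connected_partial_transversal_def by blast
    then show "x = y" using N eq by (blast dest: inj_onD)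
  qed
  moreover have "(\<one>, t) \<in> (cayley_edges_on G S (\<Union>C))\<^sup>*" if t: "t \<in> \<Union>C" for t
  proof -
    obtain M where M: "M \<in> C" "t \<in> M" using t by blast
    then have "(\<one>, t) \<in> (cayley_edges_on G S M)\<^sup>*"
      using CT unfolding connected_partial_transversal_def by blast
    then show ?thesis
      using rtrancl_mono[OF cayley_edges_on_mono[of M "\<Union>C"]] M(1) by blast
  qed
  ultimately show ?thesis
    using assms(1) CT unfolding connected_partial_transversal_def by blast
qed

lemma connected_partial_transversal_maximal_exists:
  "\<exists>T. connected_partial_transversal G S K T \<and>
     (\<forall>M. connected_partial_transversal G S K M \<longrightarrow> T \<subseteq> M \<longrightarrow> M = T)"
proof -
  have "connected_partial_transversal G S K {\<one>}"
    unfolding connected_partial_transversal_def by auto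
  then have "Collect (connected_partial_transversal G S K) \<noteq> {}" by blast
  from subset_Zorn_nonempty[OF this] connected_partial_transversal_chain_Union
  show ?thesis by (metis mem_Collect_eq)
qed

text \<open>A maximal connected partial transversal already meets the \<open>K\<close>-coset of each of its
  Cayley-graph neighbours: otherwise that neighbour could be added.\<close>

lemma maximal_connected_partial_transversal_neighbour:
  assumes T: "connected_partial_transversal G S K T"
    and max: "\<And>M. connected_partial_transversal G S K M \<Longrightarrow> T \<subseteq> M \<Longrightarrow> M = T"
    and "t \<in> T" "u \<in> carrier G" "s \<in> S" "u = t \<otimes> s \<or> t = u \<otimes> s"
  shows "K #> u \<in> (\<lambda>g. K #> g) ` T"
proof (rule ccontr)
  assume new: "K #> u \<notin> (\<lambda>g. K #> g) ` T"
  have edge: "(t, u) \<in> cayley_edges_on G S (insert u T)"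
    using assms(3-6) unfolding cayley_edges_on_def by auto
  have "(\<one>, x) \<in> (cayley_edges_on G S (insert u T))\<^sup>*" if "x \<in> T" for x
    using T that rtrancl_mono[OF cayley_edges_on_mono[of T "insert u T"]]
    unfolding connected_partial_transversal_def by blast
  with edge assms(3) have "(\<one>, u) \<in> (cayley_edges_on G S (insert u T))\<^sup>*"
    by (meson rtrancl.rtrancl_into_rtrancl)
  with T new assms(4) \<open>\<And>x. x \<in> T \<Longrightarrow> _\<close>
  have "connected_partial_transversal G S K (insert u T)"
    unfolding connected_partial_transversal_def by auto
  then have "insert u T = T" using max by blast
  then show False using new by blast
qed

lemma maximal_connected_partial_transversal_surj:
  assumes K: "K \<subseteq> carrier G" and S: "S \<subseteq> carrier G" and gen: "generate G S = carrier G"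
    and T: "connected_partial_transversal G S K T"
    and max: "\<And>M. connected_partial_transversal G S K M \<Longrightarrow> T \<subseteq> M \<Longrightarrow> M = T"
  shows "(\<lambda>g. K #> g) ` T = rcosets K"
proof -
  let ?R = "(\<lambda>g. K #> g) ` T"
  have Tc: "T \<subseteq> carrier G" and one: "\<one> \<in> T"
    using T unfolding connected_partial_transversal_def by auto
  have step: "K #> (y \<otimes> u) \<in> ?R"
    if y: "y \<in> carrier G" "K #> y \<in> ?R" and s: "s \<in> S" and u: "u = s \<or> u = inv s"
    for y s u
  proof -
    obtain t where t: "t \<in> T" "K #> y = K #> t" using y(2) by blast
    have c: "t \<in> carrier G" "s \<in> carrier G" using t(1) Tc s S by auto
    then have "t \<otimes> u \<in> carrier G" "t \<otimes> u = t \<otimes> s \<or> t = t \<otimes> u \<otimes> s"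
      using u by (auto simp: m_assoc)
    then have "K #> (t \<otimes> u) \<in> ?R"
      using maximal_connected_partial_transversal_neighbour[OF T max t(1) _ s] by blast
    moreover have "K #> (y \<otimes> u) = K #> (t \<otimes> u)"
      using rcos_eq_mult_right[OF K y(1)] c t(2) u by auto
    ultimately show ?thesis by simp
  qed
  have "\<forall>y\<in>carrier G. K #> y \<in> ?R \<longrightarrow> K #> (y \<otimes> x) \<in> ?R" if "x \<in> generate G S" for x
    using that
  proof (induction x rule: generate.induct)
    case (eng h1 h2)
    then have "h1 \<in> carrier G" "h2 \<in> carrier G" using gen by auto
    with eng.IH show ?case by (simp add: m_assoc[symmetric])
  qed (use step in auto)
  then have "K #> x \<in> ?R" if "x \<in> carrier G" for x
    using that one gen by force
  then show ?thesis using Tc unfolding RCOSETS_def by auto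
qed

lemma connected_transversal_exists:
  assumes "K \<subseteq> carrier G" "S \<subseteq> carrier G" "generate G S = carrier G"
  obtains T where "T \<subseteq> carrier G" "inj_on (\<lambda>g. K #> g) T"
    "(\<lambda>g. K #> g) ` T = rcosets K" "\<And>a b. a \<in> T \<Longrightarrow> b \<in> T \<Longrightarrow> (a, b) \<in> (cayley_edges_on G S T)\<^sup>*"
proof -
  obtain T where T: "connected_partial_transversal G S K T"
    and max: "\<And>M. connected_partial_transversal G S K M \<Longrightarrow> T \<subseteq> M \<Longrightarrow> M = T"
    using connected_partial_transversal_maximal_exists by blast
  show ?thesis
  proof (rule that)
    show "T \<subseteq> carrier G" "inj_on (\<lambda>g. K #> g) T"
      using T unfolding connected_partial_transversal_def by auto
    show "(\<lambda>g. K #> g) ` T = rcosets K"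
      by (rule maximal_connected_partial_transversal_surj[OF assms T max])
    fix a b assume "a \<in> T" "b \<in> T"
    then have "(\<one>, a) \<in> (cayley_edges_on G S T)\<^sup>*" "(\<one>, b) \<in> (cayley_edges_on G S T)\<^sup>*"
      using T unfolding connected_partial_transversal_def by auto
    then show "(a, b) \<in> (cayley_edges_on G S T)\<^sup>*"
      using sym_rtrancl[OF sym_cayley_edges_on] by (meson rtrancl_trans symD)
  qed
qed

lemma schreier_edge_mult:
  assumes "x \<in> carrier G" "s \<in> S"
  shows "(H #> x, H #> (x \<otimes> s)) \<in> schreier_edges G H S"
    and "(H #> (x \<otimes> s), H #> x) \<in> schreier_edges G H S"
  using assms unfolding schreier_edges_def Let_def by auto

lemma schreier_translate_coarsely_connected:
  assumes H: "H \<subseteq> carrier G" and S: "S \<subseteq> carrier G" and T: "T \<subseteq> carrier G"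
    and g: "g \<in> carrier G"
    and conn: "\<And>a b. a \<in> T \<Longrightarrow> b \<in> T \<Longrightarrow> (a, b) \<in> (cayley_edges_on G S T)\<^sup>*"
  shows "coarsely_connected (rcosets H) (schreier_edges G H S) 1 ((\<lambda>t. H #> (g \<otimes> t)) ` T)"
proof -
  let ?f = "\<lambda>t. H #> (g \<otimes> t)"
  let ?Q = "{(x, y). x \<in> ?f ` T \<and> y \<in> ?f ` T \<and> dist_le (rcosets H) (schreier_edges G H S) 1 x y}"
  have edge: "(?f a, ?f b) \<in> ?Q" if ab: "(a, b) \<in> cayley_edges_on G S T" for a b
  proof -
    obtain s where ab: "a \<in> T" "b \<in> T" "s \<in> S" "b = a \<otimes> s \<or> a = b \<otimes> s"
      using ab unfolding cayley_edges_on_def by blast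
    have c: "a \<in> carrier G" "b \<in> carrier G" "s \<in> carrier G" using ab(1-3) T S by auto
    from ab(4) have "(?f a, ?f b) \<in> schreier_edges G H S"
    proof
      assume "b = a \<otimes> s"
      then show ?thesis using schreier_edge_mult(1)[of "g \<otimes> a", OF _ ab(3)] g c by (simp add: m_assoc)
    next
      assume "a = b \<otimes> s"
      then show ?thesis using schreier_edge_mult(2)[of "g \<otimes> b", OF _ ab(3)] g c by (simp add: m_assoc)
    qed
    then show ?thesis using ab(1,2) unfolding dist_le_def by simp
  qed
  have "(?f a, ?f b) \<in> ?Q\<^sup>*" if "(a, b) \<in> (cayley_edges_on G S T)\<^sup>*" for a b
    using that
  proof (induction rule: rtrancl_induct)
    case (step b c)
    then show ?case using edge by (meson rtrancl.rtrancl_into_rtrancl)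
  qed simp
  with conn show ?thesis unfolding coarsely_connected_def by (auto simp only: image_iff)
qed

lemma rcos_subgroup_mult_left:
  assumes "subgroup K G" "g \<in> K" "t \<in> carrier G"
  shows "K #> (g \<otimes> t) = K #> t"
  using assms coset_mult_assoc subgroup.rcos_const subgroup.mem_carrier subgroup.subset
  by (metis is_group)

lemma schreier_translate_infinite:
  assumes H: "subgroup H G" and K: "subgroup K G" and "H \<subseteq> K" and g: "g \<in> K"
    and T: "T \<subseteq> carrier G" and surj: "(\<lambda>t. K #> t) ` T = rcosets K"
    and "infinite (rcosets K)"
  shows "infinite ((\<lambda>t. H #> (g \<otimes> t)) ` T)"
proof
  assume "finite ((\<lambda>t. H #> (g \<otimes> t)) ` T)"
  then have "finite ((\<lambda>c. K <#> c) ` (\<lambda>t. H #> (g \<otimes> t)) ` T)" by simp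
  moreover have "(\<lambda>c. K <#> c) ` (\<lambda>t. H #> (g \<otimes> t)) ` T = rcosets K"
  proof -
    have "K <#> (H #> (g \<otimes> t)) = K #> t" if "t \<in> T" for t
      using set_mult_rcos_project[OF H K \<open>H \<subseteq> K\<close>] rcos_subgroup_mult_left[OF K g]
        subgroup.mem_carrier[OF K g] T that by auto
    then have "(\<lambda>c. K <#> c) ` (\<lambda>t. H #> (g \<otimes> t)) ` T = (\<lambda>t. K #> t) ` T"
      unfolding image_image by (rule image_cong[OF refl])
    then show ?thesis using surj by simp
  qed
  ultimately show False using \<open>infinite (rcosets K)\<close> by simp
qed

lemma schreier_translate_subset:
  assumes "H \<subseteq> carrier G" "g \<in> carrier G" "T \<subseteq> carrier G"
  shows "(\<lambda>t. H #> (g \<otimes> t)) ` T \<subseteq> rcosets H"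
  using assms by (auto intro!: rcosetsI)

lemma schreier_translate_unbounded:
  assumes H: "subgroup H G" and K: "subgroup K G" and "H \<subseteq> K" and g: "g \<in> K"
    and "finite S" "S \<subseteq> carrier G"
    and T: "T \<subseteq> carrier G" and "(\<lambda>t. K #> t) ` T = rcosets K" and "infinite (rcosets K)"
  shows "unbounded_set (rcosets H) (schreier_edges G H S) ((\<lambda>t. H #> (g \<otimes> t)) ` T)"
  using schreier_bounded_finite[OF subgroup.subset[OF H] assms(5,6)
      schreier_translate_subset[OF subgroup.subset[OF H] subgroup.mem_carrier[OF K g] T]]
    schreier_translate_infinite[OF H K assms(3,4) T assms(8,9)]
  by blast

lemma schreier_translates_disjoint:
  assumes H: "subgroup H G" and K: "subgroup K G" and "H \<subseteq> K" and g: "g \<in> K" "g' \<in> K"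
    and T: "T \<subseteq> carrier G" and inj: "inj_on (\<lambda>t. K #> t) T" and "H #> g \<noteq> H #> g'"
  shows "(\<lambda>t. H #> (g \<otimes> t)) ` T \<inter> (\<lambda>t. H #> (g' \<otimes> t)) ` T = {}"
proof (rule ccontr)
  assume "\<not> ?thesis"
  then obtain t t' where t: "t \<in> T" "t' \<in> T" and eq: "H #> (g \<otimes> t) = H #> (g' \<otimes> t')"
    by blast
  have c: "g \<in> carrier G" "g' \<in> carrier G" "t \<in> carrier G" "t' \<in> carrier G"
    using g t T subgroup.mem_carrier[OF K] by auto
  have "K #> t = K <#> (H #> (g \<otimes> t))"
    using set_mult_rcos_project[OF H K \<open>H \<subseteq> K\<close>] rcos_subgroup_mult_left[OF K g(1)] c
    by simp
  also have "\<dots> = K #> t'"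
    using set_mult_rcos_project[OF H K \<open>H \<subseteq> K\<close>] rcos_subgroup_mult_left[OF K g(2)] c eq
    by simp
  finally have "t' = t" using inj t by (blast dest: inj_onD)
  then have "H #> (g \<otimes> t \<otimes> inv t) = H #> (g' \<otimes> t \<otimes> inv t)"
    using rcos_eq_mult_right[OF subgroup.subset[OF H] _ _ inv_closed eq] c \<open>t' = t\<close> by simp
  moreover have "g \<otimes> t \<otimes> inv t = g" "g' \<otimes> t \<otimes> inv t = g'" using c by (simp_all add: m_assoc)
  ultimately show False using \<open>H #> g \<noteq> H #> g'\<close> by simp
qed

lemma infinite_rcosets_sequence:
  assumes "infinite (rcosets\<^bsub>G\<lparr>carrier := K\<rparr>\<^esub> H)"
  obtains k :: "nat \<Rightarrow> 'a" where "\<And>i. k i \<in> K" "inj (\<lambda>i. H #> k i)"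
proof -
  have "rcosets\<^bsub>G\<lparr>carrier := K\<rparr>\<^esub> H = (\<lambda>k. H #> k) ` K"
    unfolding RCOSETS_def by auto
  moreover obtain f :: "nat \<Rightarrow> 'a set" where "inj f" "range f \<subseteq> rcosets\<^bsub>G\<lparr>carrier := K\<rparr>\<^esub> H"
    using infinite_countable_subset[OF assms] by blast
  ultimately have "\<forall>i. \<exists>x. x \<in> K \<and> f i = H #> x" by blast
  then obtain k where k: "\<forall>i. k i \<in> K \<and> f i = H #> k i" by metis
  show ?thesis
  proof (rule that)
    show "k i \<in> K" for i using k by blast
    have "(\<lambda>i. H #> k i) = f" using k by auto
    then show "inj (\<lambda>i. H #> k i)" using \<open>inj f\<close> by simp
  qed
qed

end

theorem mainTheorem11:
  fixes G (structure) and H K :: "'a set"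
  assumes "group G"
    and "\<exists>S. finite S \<and> S \<subseteq> carrier G \<and> generate G S = carrier G"
    and "subgroup H G" and "subgroup K G" and "H \<subseteq> K"
    and "narrow_coset_space G H"
  shows "finite (rcosets K) \<or> finite (rcosets\<^bsub>G\<lparr>carrier := K\<rparr>\<^esub> H)"
proof (rule ccontr)
  assume "\<not> ?thesis"
  then have infK: "infinite (rcosets K)" and infH: "infinite (rcosets\<^bsub>G\<lparr>carrier := K\<rparr>\<^esub> H)"
    by auto
  interpret group G by fact
  note H = \<open>subgroup H G\<close> and K = \<open>subgroup K G\<close> and HK = \<open>H \<subseteq> K\<close>
  obtain S where "finite S" and S: "S \<subseteq> carrier G" and "generate G S = carrier G"
    and narrow: "narrow_graph (rcosets H) (schreier_edges G H S)"
    using \<open>narrow_coset_space G H\<close> unfolding narrow_coset_space_def by blast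
  obtain T where T: "T \<subseteq> carrier G" and injT: "inj_on (\<lambda>g. K #> g) T"
    and surjT: "(\<lambda>g. K #> g) ` T = rcosets K"
    and connT: "\<And>a b. a \<in> T \<Longrightarrow> b \<in> T \<Longrightarrow> (a, b) \<in> (cayley_edges_on G S T)\<^sup>*"
    using connected_transversal_exists[OF subgroup.subset[OF K] S \<open>generate G S = carrier G\<close>]
    by metis
  obtain k :: "nat \<Rightarrow> 'a" where k: "\<And>i. k i \<in> K" and "inj (\<lambda>i. H #> k i)"
    using infinite_rcosets_sequence[OF infH] by metis
  define Z where "Z i = (\<lambda>t. H #> (k i \<otimes> t)) ` T" for i
  have ki: "k i \<in> carrier G" for i using k subgroup.mem_carrier[OF K] by blast
  have "\<exists>i j. i \<noteq> j \<and> Z i \<inter> Z j \<noteq> {}"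
  proof (rule narrow_graph_family_intersect[OF narrow order_refl])
    show "Z i \<subseteq> rcosets H" for i
      unfolding Z_def by (rule schreier_translate_subset[OF subgroup.subset[OF H] ki T])
    show "unbounded_set (rcosets H) (schreier_edges G H S) (Z i)" for i
      unfolding Z_def by (rule schreier_translate_unbounded[OF H K HK k \<open>finite S\<close> S T surjT infK])
    show "coarsely_connected (rcosets H) (schreier_edges G H S) 1 (Z i)" for i
      unfolding Z_def
      by (rule schreier_translate_coarsely_connected[OF subgroup.subset[OF H] S T ki connT])
  qed
  moreover have "Z i \<inter> Z j = {}" if "i \<noteq> j" for i j
  proof -
    have "H #> k i \<noteq> H #> k j" using \<open>inj (\<lambda>i. H #> k i)\<close> that by (meson inj_eq)
    then show ?thesis unfolding Z_def by (rule schreier_translates_disjoint[OF H K HK k k T injT])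
  qed
  ultimately show False by blast
qed

end
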